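(* There exist absolute constants $C_1,C_2>0$ such that the following holds. Let $\Xi\in(-1,1)^{n\times n}$ be a symmetric matrix whose entries $\Xi_{ij}$, $1\le i\le j\le n$, are independent Bernoulli errors. Let the index set $\{1,\dots,n\}$ be partitioned into $K$ groups, so that $\Xi$ is partitioned into $K^2$ submatrices $\Xi^{(k,l)}$ with $\Xi^{(k,l)}=(\Xi^{(l,k)})^T$, and let $J^{(k,l)}=J_{k,l}\times J_{l,k}$, $k,l=1,\dots,K$, where $J_{k,l}$ is a subset of group $k$. Then for any $x>0$, $$\mathbb P\Big\{\sum_{k,l=1}^K\big\|\Pi_{J^{(k,l)}}(\Xi^{(k,l)})\big\|_{op}^2\le C_1|J|+C_2x\Big\}\ge1-e^{-x},$$ where $|J|=\sum_{k,l}|J_{k,l}|$; $C_1,C_2$ do not depend on $n$, $K$, or the sets $J_{k,l}$.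
   Context: A Bernoulli error is a random variable $\xi=b-p$ with $b\sim\mathrm{Bernoulli}(p)$, $p\in[0,1]$. $\Xi^{(k,l)}$ is the submatrix of $\Xi$ with rows in group $k$ and columns in group $l$. $\Pi_{J^{(k,l)}}(X)$ sets entries of $X$ outside $J^{(k,l)}$ to zero. $\|\cdot\|_{op}$ is the spectral norm. *)

theory Defs
  imports "HOL-Analysis.Analysis" "HOL-Probability.Probability"
begin

text \<open>Index pairs (i,j) with i \<le> j < n: the independent upper-triangular entries.\<close>
definition upper_idx :: "nat \<Rightarrow> (nat \<times> nat) set" where
  "upper_idx n = {(i, j). i \<le> j \<and> j < n}"

definition bern_law :: "nat \<Rightarrow> (nat \<Rightarrow> nat \<Rightarrow> real) \<Rightarrow> (nat \<times> nat \<Rightarrow> bool) pmf" where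
  "bern_law n p = Pi_pmf (upper_idx n) False (\<lambda>(i, j). bernoulli_pmf (p i j))"

definition Xi :: "(nat \<Rightarrow> nat \<Rightarrow> real) \<Rightarrow> (nat \<times> nat \<Rightarrow> bool) \<Rightarrow> nat \<Rightarrow> nat \<Rightarrow> real" where
  "Xi p b i j = (if i \<le> j then of_bool (b (i, j)) - p i j else of_bool (b (j, i)) - p j i)"

definition op_norm :: "nat set \<Rightarrow> nat set \<Rightarrow> (nat \<Rightarrow> nat \<Rightarrow> real) \<Rightarrow> real" where
  "op_norm R C A = Sup {sqrt (\<Sum>i\<in>R. (\<Sum>j\<in>C. A i j * v j)^2) | v. (\<Sum>j\<in>C. (v j)^2) \<le> 1}"

text \<open>Pi_{J^{(k,l)}}(Xi^{(k,l)}): the block with rows in group k and columns in group l,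
  entries outside J_{k,l} \<times> J_{l,k} set to zero.\<close>
definition proj_block ::
  "(nat \<Rightarrow> nat \<Rightarrow> nat set) \<Rightarrow> nat \<Rightarrow> nat \<Rightarrow> (nat \<Rightarrow> nat \<Rightarrow> real) \<Rightarrow> nat \<Rightarrow> nat \<Rightarrow> real" where
  "proj_block J k l X i j = (if i \<in> J k l \<and> j \<in> J l k then X i j else 0)"

end

theory Submission
  imports Defs
begin

(* Spectral norms are controlled on 1/4-nets of unit balls: for a net N of the unit ball of R^I with
   at most 512^|I| points, ||A|| <= 16/7 max {u' A v | u, v in N} and ||y|| <= 4/3 max {<w, y> | w in N}.
   Applying the first bound to every block and the second to the vector of block maxima gives
   sum_{k,l} ||Pi_J(Xi^(k,l))||^2 <= (64/21)^2 F_theta(Xi)^2 for some theta from a family of at most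
   e^(27 |J|) parameters, where each F_theta is a linear form in the independent Bernoulli errors with
   squared coefficients summing to at most 8 (the supports J_{k,l} x J_{l,k} of distinct blocks are
   disjoint). Hoeffding's inequality gives P(F_theta >= t) <= e^(-t^2/16), and a union bound over theta
   with t^2 = 16 (27 |J| + x) yields C1 = 432 (64/21)^2 and C2 = 16 (64/21)^2. *)

lemma power2_L2_set: "(L2_set f A)^2 = (\<Sum>i\<in>A. (f i)^2)"
  unfolding L2_set_def by (simp add: sum_nonneg)

lemma abs_sum_mult_le_L2_set: "\<bar>\<Sum>i\<in>A. f i * g i\<bar> \<le> L2_set f A * L2_set g A"
  using sum_abs[of "\<lambda>i. f i * g i" A] L2_set_mult_ineq[of f g A] by (simp add: abs_mult)

lemma L2_set_normalize_le_1: "L2_set (\<lambda>i. f i / L2_set f A) A \<le> 1"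
proof -
  have "L2_set (\<lambda>i. f i / L2_set f A) A = L2_set f A * inverse (L2_set f A)"
    by (simp add: L2_set_left_distrib divide_inverse)
  then show ?thesis by (cases "L2_set f A = 0") simp_all
qed

lemma sum_normalize_mult_eq_L2_set: "(\<Sum>i\<in>A. f i / L2_set f A * f i) = L2_set f A"
proof -
  have "(\<Sum>i\<in>A. f i / L2_set f A * f i) = (\<Sum>i\<in>A. (f i)^2) / L2_set f A"
    by (simp add: sum_divide_distrib power2_eq_square)
  also have "\<dots> = (L2_set f A)^2 / L2_set f A"
    by (simp only: power2_L2_set)
  also have "\<dots> = L2_set f A"
    by (cases "L2_set f A = 0") (simp_all add: power2_eq_square)
  finally show ?thesis .
qed

lemma power2_sum_eq_sum_power2:
  fixes f :: "'a \<Rightarrow> 'b::comm_semiring_1"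
  assumes "finite A" and "\<And>a b. a \<in> A \<Longrightarrow> b \<in> A \<Longrightarrow> f a \<noteq> 0 \<Longrightarrow> f b \<noteq> 0 \<Longrightarrow> a = b"
  shows "(\<Sum>a\<in>A. f a)^2 = (\<Sum>a\<in>A. (f a)^2)"
proof (cases "\<exists>a\<in>A. f a \<noteq> 0")
  case True
  then obtain a where a: "a \<in> A" "f a \<noteq> 0" by blast
  then have others: "\<forall>b\<in>A - {a}. f b = 0" using assms(2) by blast
  have "(\<Sum>a\<in>A. f a) = f a" "(\<Sum>a\<in>A. (f a)^2) = (f a)^2"
    using sum.remove[OF assms(1) a(1), of f] sum.remove[OF assms(1) a(1), of "\<lambda>x. (f x)^2"] others
    by simp_all
  then show ?thesis by simp
qed simp

lemma sum_power2_outer_product: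
  "(\<Sum>i\<in>R. \<Sum>j\<in>C. (c * u i * v j)^2) = c^2 * (L2_set u R)^2 * (L2_set v C)^2"
proof -
  have "(\<Sum>i\<in>R. \<Sum>j\<in>C. (c * u i * v j)^2) = (\<Sum>i\<in>R. \<Sum>j\<in>C. c^2 * ((u i)^2 * (v j)^2))"
    by (simp add: power_mult_distrib mult.assoc)
  also have "\<dots> = c^2 * ((\<Sum>i\<in>R. (u i)^2) * (\<Sum>j\<in>C. (v j)^2))"
    unfolding sum_product by (simp only: sum_distrib_left)
  finally show ?thesis by (simp add: power2_L2_set mult.assoc)
qed

lemma sum_sum_if_mem_subset:
  assumes "finite S" "finite T" "A \<subseteq> S" "B \<subseteq> T"
  shows "(\<Sum>i\<in>S. \<Sum>j\<in>T. if i \<in> A \<and> j \<in> B then f i j else 0) = (\<Sum>i\<in>A. \<Sum>j\<in>B. f i j)"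
proof -
  have "(\<Sum>i\<in>S. \<Sum>j\<in>T. if i \<in> A \<and> j \<in> B then f i j else 0)
      = (\<Sum>i\<in>S. if i \<in> A then \<Sum>j\<in>T. if j \<in> B then f i j else 0 else 0)"
    by (intro sum.cong) auto
  also have "\<dots> = (\<Sum>i\<in>A. \<Sum>j\<in>T. if j \<in> B then f i j else 0)"
    using assms by (simp add: sum.inter_restrict[symmetric] Int_absorb1)
  also have "\<dots> = (\<Sum>i\<in>A. \<Sum>j\<in>B. f i j)"
    using assms by (simp add: sum.inter_restrict[symmetric] Int_absorb1)
  finally show ?thesis .
qed

lemma sum_swap3: "(\<Sum>i\<in>I. \<Sum>j\<in>J. \<Sum>a\<in>A. f a i j) = (\<Sum>a\<in>A. \<Sum>i\<in>I. \<Sum>j\<in>J. f a i j)"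
proof -
  have "(\<Sum>i\<in>I. \<Sum>j\<in>J. \<Sum>a\<in>A. f a i j) = (\<Sum>i\<in>I. \<Sum>a\<in>A. \<Sum>j\<in>J. f a i j)"
    by (rule sum.cong[OF refl]) (rule sum.swap)
  also have "\<dots> = (\<Sum>a\<in>A. \<Sum>i\<in>I. \<Sum>j\<in>J. f a i j)"
    by (rule sum.swap)
  finally show ?thesis .
qed

lemma PiE_attaining_Max:
  assumes "\<And>x. x \<in> A \<Longrightarrow> finite (S x)" and "\<And>x. x \<in> A \<Longrightarrow> S x \<noteq> {}"
  shows "\<exists>U\<in>PiE A S. \<forall>x\<in>A. g x (U x) = Max (g x ` S x)"
proof -
  have "\<forall>x\<in>A. \<exists>s. s \<in> S x \<and> g x s = Max (g x ` S x)"
  proof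
    fix x assume "x \<in> A"
    then have "Max (g x ` S x) \<in> g x ` S x" using assms by (intro Max_in) auto
    then show "\<exists>s. s \<in> S x \<and> g x s = Max (g x ` S x)" by force
  qed
  from bchoice[OF this] obtain f where "\<forall>x\<in>A. f x \<in> S x \<and> g x (f x) = Max (g x ` S x)"
    by blast
  then show ?thesis by (intro bexI[of _ "restrict f A"]) (auto simp: restrict_PiE_iff)
qed

lemma power_two_le_exp: "(2::real) ^ m \<le> exp (real m)"
proof -
  have "(2::real) ^ m \<le> exp 1 ^ m"
    using exp_ge_add_one_self[of 1] by (intro power_mono) auto
  also have "\<dots> = exp (real m)" by (simp flip: exp_of_nat_mult)
  finally show ?thesis .
qed

section \<open>Nets of the Euclidean unit ball\<close>

lemma sum_power2_interval_abs:
  "(\<Sum>t\<in>{-int L..int L}. (2::nat) ^ nat (int L - \<bar>t\<bar>)) + 2 = 3 * 2 ^ L"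
proof (induction L)
  case 0
  then show ?case by simp
next
  case (Suc L)
  have split: "{-int (Suc L)..int (Suc L)} = insert (-int (Suc L)) (insert (int (Suc L)) {-int L..int L})"
    by auto
  have double: "(2::nat) ^ nat (int (Suc L) - \<bar>t\<bar>) = 2 * 2 ^ nat (int L - \<bar>t\<bar>)"
    if "t \<in> {-int L..int L}" for t
  proof -
    have "nat (int (Suc L) - \<bar>t\<bar>) = Suc (nat (int L - \<bar>t\<bar>))" using that by auto
    then show ?thesis by simp
  qed
  have "(\<Sum>t\<in>{-int (Suc L)..int (Suc L)}. (2::nat) ^ nat (int (Suc L) - \<bar>t\<bar>))
      = 2 + (\<Sum>t\<in>{-int L..int L}. (2::nat) ^ nat (int (Suc L) - \<bar>t\<bar>))"
    unfolding split by simp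
  also have "\<dots> = 2 + 2 * (\<Sum>t\<in>{-int L..int L}. 2 ^ nat (int L - \<bar>t\<bar>))"
    by (simp only: sum_distrib_left sum.cong[OF refl double])
  finally show ?case using Suc.IH by simp
qed

definition int_l1_ball :: "'a set \<Rightarrow> nat \<Rightarrow> ('a \<Rightarrow> int) set" where
  "int_l1_ball I L = {z. (\<forall>i. i \<notin> I \<longrightarrow> z i = 0) \<and> (\<Sum>i\<in>I. \<bar>z i\<bar>) \<le> int L}"

lemma finite_card_int_l1_ball:
  "finite I \<Longrightarrow> finite (int_l1_ball I L) \<and> card (int_l1_ball I L) \<le> 4 ^ card I * 2 ^ L"
proof (induction I arbitrary: L rule: finite_induct)
  case empty
  have empty_ball: "int_l1_ball {} L = {\<lambda>_. 0}" by (auto simp: int_l1_ball_def)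
  show ?case unfolding empty_ball by simp
next
  case (insert a I)
  let ?U = "\<Union>t\<in>{-int L..int L}. (\<lambda>z. z(a := t)) ` int_l1_ball I (nat (int L - \<bar>t\<bar>))"
  have sub: "int_l1_ball (insert a I) L \<subseteq> ?U"
  proof
    fix z assume z: "z \<in> int_l1_ball (insert a I) L"
    have rest: "(\<Sum>i\<in>I. \<bar>z i\<bar>) \<ge> 0" by (simp add: sum_nonneg)
    have total: "\<bar>z a\<bar> + (\<Sum>i\<in>I. \<bar>z i\<bar>) \<le> int L"
      using z insert by (simp add: int_l1_ball_def)
    have "(\<Sum>i\<in>I. \<bar>(z(a := 0)) i\<bar>) = (\<Sum>i\<in>I. \<bar>z i\<bar>)"
      using insert by (intro sum.cong) auto
    then have "z(a := 0) \<in> int_l1_ball I (nat (int L - \<bar>z a\<bar>))"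
      using z total rest by (auto simp: int_l1_ball_def)
    moreover have "\<bar>z a\<bar> \<le> int L" using total rest by linarith
    then have "z a \<in> {-int L..int L}" by auto
    moreover have "z = (z(a := 0))(a := z a)" by simp
    ultimately show "z \<in> ?U" by blast
  qed
  have "card ?U \<le> (\<Sum>t\<in>{-int L..int L}. card ((\<lambda>z. z(a := t)) ` int_l1_ball I (nat (int L - \<bar>t\<bar>))))"
    by (rule card_UN_le) simp
  also have "\<dots> \<le> (\<Sum>t\<in>{-int L..int L}. 4 ^ card I * 2 ^ nat (int L - \<bar>t\<bar>))"
    by (intro sum_mono order.trans[OF card_image_le]) (use insert.IH in auto)
  also have "\<dots> = 4 ^ card I * (\<Sum>t\<in>{-int L..int L}. 2 ^ nat (int L - \<bar>t\<bar>))"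
    by (simp add: sum_distrib_left)
  also have "\<dots> \<le> 4 ^ card I * (3 * 2 ^ L)"
    using sum_power2_interval_abs[of L] by (intro mult_left_mono) linarith+
  also have "\<dots> \<le> 4 ^ card (insert a I) * 2 ^ L" using insert by simp
  finally show ?case
    using sub insert.IH by (meson card_mono finite_UN_I finite_atLeastAtMost_int finite_imageI finite_subset order.trans)
qed

lemma sum_abs_le_sum_power2_int: "(\<Sum>i\<in>I. \<bar>z i\<bar>) \<le> (\<Sum>i\<in>I. (z i)^2 :: int)"
proof (rule sum_mono)
  fix i
  show "\<bar>z i\<bar> \<le> (z i)^2"
  proof (cases "z i = 0")
    case False
    then have "\<bar>z i\<bar> * 1 \<le> \<bar>z i\<bar> * \<bar>z i\<bar>" by (intro mult_left_mono) auto
    then show ?thesis by (simp add: power2_eq_square abs_mult_self_eq)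
  qed simp
qed

(* Rescaled lattice points: rounding a unit vector to the grid (2 sqrt |I|)^-1 Z^I moves it by at
   most 1/4, and since |k| <= k^2 for integers, the rounded integer vector has l1-norm at most
   4 |I| (5/4)^2 <= 7 |I|. *)
definition ball_net :: "'a set \<Rightarrow> ('a \<Rightarrow> real) set" where
  "ball_net I = {u. L2_set u I \<le> 5/4} \<inter>
     (\<lambda>z i. real_of_int (z i) / (2 * sqrt (card I))) ` int_l1_ball I (7 * card I)"

lemma L2_set_ball_net_le: "u \<in> ball_net I \<Longrightarrow> L2_set u I \<le> 5/4"
  by (simp add: ball_net_def)

lemma zero_in_ball_net: "(\<lambda>_. 0) \<in> ball_net I"
proof -
  have "(\<lambda>_. 0::real) \<in> (\<lambda>z i. real_of_int (z i) / (2 * sqrt (card I))) ` int_l1_ball I (7 * card I)"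
    by (rule image_eqI[of _ _ "\<lambda>_. 0"]) (simp_all add: int_l1_ball_def)
  then show ?thesis by (simp add: ball_net_def L2_set_def)
qed

lemma finite_ball_net: "finite I \<Longrightarrow> finite (ball_net I)"
  unfolding ball_net_def using finite_card_int_l1_ball by blast

lemma card_ball_net_le:
  assumes "finite I"
  shows "card (ball_net I) \<le> 512 ^ card I"
proof -
  have "card (ball_net I) \<le> card (int_l1_ball I (7 * card I))"
    unfolding ball_net_def using finite_card_int_l1_ball[OF assms]
    by (meson card_image_le card_mono finite_imageI inf_le2 order.trans)
  also have "\<dots> \<le> 4 ^ card I * 2 ^ (7 * card I)"
    using finite_card_int_l1_ball[OF assms] by blast
  also have "\<dots> = 512 ^ card I"
    by (simp add: power_mult power_mult_distrib[symmetric])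
  finally show ?thesis .
qed

definition grid_round :: "'a set \<Rightarrow> ('a \<Rightarrow> real) \<Rightarrow> 'a \<Rightarrow> int" where
  "grid_round I u i = (if i \<in> I then round (u i * (2 * sqrt (card I))) else 0)"

lemma L2_set_grid_round_error_le:
  assumes "finite I"
  defines "s \<equiv> 2 * sqrt (card I)"
  shows "L2_set (\<lambda>i. u i - of_int (grid_round I u i) / s) I \<le> 1/4"
proof -
  have err: "\<bar>u i - of_int (grid_round I u i) / s\<bar> \<le> 1 / (2 * s)" if "i \<in> I" for i
  proof -
    have s_pos: "s > 0"
      using that assms(1) by (simp add: s_def card_gt_0_iff) blast
    have "\<bar>u i - of_int (grid_round I u i) / s\<bar> = \<bar>of_int (round (u i * s)) - u i * s\<bar> / s"
      using that s_pos
      by (simp add: grid_round_def s_def field_simps abs_div_pos[symmetric] abs_minus_commute)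
    also have "\<dots> \<le> (1/2) / s"
      using s_pos of_int_round_abs_le[of "u i * s"] by (intro divide_right_mono) auto
    finally show ?thesis by simp
  qed
  have "L2_set (\<lambda>i. u i - of_int (grid_round I u i) / s) I
      = L2_set (\<lambda>i. \<bar>u i - of_int (grid_round I u i) / s\<bar>) I"
    by (simp add: L2_set_def)
  also have "\<dots> \<le> L2_set (\<lambda>_. 1 / (2 * s)) I"
    by (intro L2_set_mono err) simp_all
  also have "\<dots> = sqrt (card I) / (4 * sqrt (card I))"
    by (simp add: L2_set_constant s_def)
  also have "\<dots> \<le> 1/4"
    by (cases "card I = 0") simp_all
  finally show ?thesis .
qed

lemma grid_round_in_int_l1_ball:
  assumes "finite I"
    and norm: "L2_set (\<lambda>i. of_int (grid_round I u i) / (2 * sqrt (card I))) I \<le> 5/4"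
  shows "grid_round I u \<in> int_l1_ball I (7 * card I)"
proof -
  define s where "s = 2 * sqrt (card I)"
  have s_pos: "s > 0" if "i \<in> I" for i
    using that assms(1) by (simp add: s_def card_gt_0_iff) blast
  have "real_of_int (\<Sum>i\<in>I. \<bar>grid_round I u i\<bar>) \<le> real_of_int (\<Sum>i\<in>I. (grid_round I u i)^2)"
    using sum_abs_le_sum_power2_int by (simp only: of_int_le_iff)
  also have "\<dots> = (\<Sum>i\<in>I. s^2 * (of_int (grid_round I u i) / s)^2)"
    unfolding of_int_sum of_int_power
  proof (intro sum.cong refl)
    fix i assume "i \<in> I"
    then have "s \<noteq> 0" using s_pos by force
    then show "(real_of_int (grid_round I u i))^2 = s^2 * (of_int (grid_round I u i) / s)^2"
      by (simp add: power_divide)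
  qed
  also have "\<dots> = s^2 * (L2_set (\<lambda>i. of_int (grid_round I u i) / s) I)^2"
    by (simp add: power2_L2_set sum_distrib_left)
  also have "\<dots> \<le> s^2 * (5/4)^2"
    using norm unfolding s_def[symmetric] by (intro mult_left_mono power_mono) auto
  also have "\<dots> \<le> real_of_int (int (7 * card I))"
    by (simp add: s_def power2_eq_square)
  finally have "(\<Sum>i\<in>I. \<bar>grid_round I u i\<bar>) \<le> int (7 * card I)"
    by (simp only: of_int_le_iff)
  then show ?thesis by (simp add: int_l1_ball_def grid_round_def)
qed

lemma ball_net_approx:
  assumes "finite I" and u: "L2_set u I \<le> 1"
  obtains u' where "u' \<in> ball_net I" "L2_set (\<lambda>i. u i - u' i) I \<le> 1/4"
proof -
  define u' where "u' = (\<lambda>i. of_int (grid_round I u i) / (2 * sqrt (card I)))"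
  have close: "L2_set (\<lambda>i. u i - u' i) I \<le> 1/4"
    unfolding u'_def by (rule L2_set_grid_round_error_le[OF assms(1)])
  have "L2_set u' I \<le> L2_set u I + L2_set (\<lambda>i. u' i - u i) I"
    using L2_set_triangle_ineq[of u "\<lambda>i. u' i - u i" I] by simp
  also have "L2_set (\<lambda>i. u' i - u i) I = L2_set (\<lambda>i. u i - u' i) I"
    by (simp add: L2_set_def power2_commute)
  finally have norm: "L2_set u' I \<le> 5/4" using u close by linarith
  then have "grid_round I u \<in> int_l1_ball I (7 * card I)"
    unfolding u'_def by (rule grid_round_in_int_l1_ball[OF assms(1)])
  then have "u' \<in> ball_net I"
    using norm by (auto simp: ball_net_def u'_def)
  then show ?thesis using close that by blast
qed

section \<open>Operator norm\<close>

definition bilin :: "'a set \<Rightarrow> 'b set \<Rightarrow> ('a \<Rightarrow> 'b \<Rightarrow> real) \<Rightarrow> ('a \<Rightarrow> real) \<Rightarrow> ('b \<Rightarrow> real) \<Rightarrow> real"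
  where "bilin R C A u v = (\<Sum>i\<in>R. u i * (\<Sum>j\<in>C. A i j * v j))"

lemma bilin_decompose:
  "bilin R C A u v = bilin R C A u' v' + bilin R C A (\<lambda>i. u i - u' i) v + bilin R C A u' (\<lambda>j. v j - v' j)"
proof -
  have "(\<Sum>j\<in>C. A i j * (v j - v' j)) = (\<Sum>j\<in>C. A i j * v j) - (\<Sum>j\<in>C. A i j * v' j)" for i
    by (simp add: right_diff_distrib sum_subtractf)
  then show ?thesis
    by (simp add: bilin_def algebra_simps sum.distrib sum_subtractf)
qed

lemma op_norm_eq_Sup_image:
  "op_norm R C A = Sup ((\<lambda>v. L2_set (\<lambda>i. \<Sum>j\<in>C. A i j * v j) R) ` {v. L2_set v C \<le> 1})"
proof -
  have "{sqrt (\<Sum>i\<in>R. (\<Sum>j\<in>C. A i j * v j)^2) | v. (\<Sum>j\<in>C. (v j)^2) \<le> 1}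
      = (\<lambda>v. L2_set (\<lambda>i. \<Sum>j\<in>C. A i j * v j) R) ` {v. L2_set v C \<le> 1}"
    by (auto simp: L2_set_def)
  then show ?thesis by (simp add: op_norm_def)
qed

lemma L2_set_mat_vec_le_Frobenius:
  assumes "L2_set v C \<le> 1"
  shows "L2_set (\<lambda>i. \<Sum>j\<in>C. A i j * v j) R \<le> L2_set (\<lambda>i. L2_set (A i) C) R"
proof -
  have "L2_set (\<lambda>i. \<Sum>j\<in>C. A i j * v j) R = L2_set (\<lambda>i. \<bar>\<Sum>j\<in>C. A i j * v j\<bar>) R"
    by (simp add: L2_set_def)
  also have "\<dots> \<le> L2_set (\<lambda>i. L2_set (A i) C) R"
  proof (rule L2_set_mono)
    fix i
    have "\<bar>\<Sum>j\<in>C. A i j * v j\<bar> \<le> L2_set (A i) C * L2_set v C"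
      by (rule abs_sum_mult_le_L2_set)
    also have "\<dots> \<le> L2_set (A i) C"
      using assms by (simp add: mult_left_le)
    finally show "\<bar>\<Sum>j\<in>C. A i j * v j\<bar> \<le> L2_set (A i) C" .
  qed simp
  finally show ?thesis .
qed

lemma L2_set_mat_vec_le_op_norm:
  "L2_set v C \<le> 1 \<Longrightarrow> L2_set (\<lambda>i. \<Sum>j\<in>C. A i j * v j) R \<le> op_norm R C A"
  unfolding op_norm_eq_Sup_image
  by (rule cSup_upper) (auto intro!: bdd_aboveI2 L2_set_mat_vec_le_Frobenius)

lemma op_norm_nonneg: "0 \<le> op_norm R C A"
  using L2_set_mat_vec_le_op_norm[of "\<lambda>_. 0" C A R] by (simp add: L2_set_def)

lemma op_norm_le:
  assumes "\<And>v. L2_set v C \<le> 1 \<Longrightarrow> L2_set (\<lambda>i. \<Sum>j\<in>C. A i j * v j) R \<le> c"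
  shows "op_norm R C A \<le> c"
proof -
  have "(\<lambda>_. 0) \<in> {v. L2_set v C \<le> 1}" by (simp add: L2_set_def)
  then show ?thesis
    unfolding op_norm_eq_Sup_image by (intro cSup_least) (auto intro: assms)
qed

lemma L2_set_mat_vec_le_op_norm_mult:
  assumes "finite C"
  shows "L2_set (\<lambda>i. \<Sum>j\<in>C. A i j * v j) R \<le> op_norm R C A * L2_set v C"
proof (cases "L2_set v C = 0")
  case True
  with assms have "\<forall>j\<in>C. v j = 0" by (simp add: L2_set_eq_0_iff)
  then show ?thesis by (simp add: L2_set_def)
next
  case False
  have "L2_set (\<lambda>i. \<Sum>j\<in>C. A i j * v j) R
      = L2_set (\<lambda>i. \<Sum>j\<in>C. A i j * (v j / L2_set v C)) R * L2_set v C"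
    using False by (simp add: L2_set_left_distrib sum_distrib_right)
  also have "\<dots> \<le> op_norm R C A * L2_set v C"
    by (intro mult_right_mono L2_set_mat_vec_le_op_norm L2_set_normalize_le_1) simp
  finally show ?thesis .
qed

lemma bilin_le_op_norm:
  assumes "finite C"
  shows "bilin R C A u v \<le> L2_set u R * op_norm R C A * L2_set v C"
proof -
  have "bilin R C A u v \<le> L2_set u R * L2_set (\<lambda>i. \<Sum>j\<in>C. A i j * v j) R"
    unfolding bilin_def by (rule abs_le_D1[OF abs_sum_mult_le_L2_set])
  also have "\<dots> \<le> L2_set u R * (op_norm R C A * L2_set v C)"
    by (intro mult_left_mono L2_set_mat_vec_le_op_norm_mult assms) simp
  finally show ?thesis by (simp only: mult.assoc)
qed

lemma op_norm_restrict_le: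
  assumes R: "finite R" and C: "finite C" and "R' \<subseteq> R" and "C' \<subseteq> C"
  shows "op_norm R C (\<lambda>i j. if i \<in> R' \<and> j \<in> C' then A i j else 0) \<le> op_norm R' C' A"
proof (rule op_norm_le)
  fix v assume v: "L2_set v C \<le> 1"
  have row: "(\<Sum>j\<in>C. (if i \<in> R' \<and> j \<in> C' then A i j else 0) * v j)
      = (if i \<in> R' then \<Sum>j\<in>C'. A i j * v j else 0)" for i
  proof -
    have "(\<Sum>j\<in>C. (if i \<in> R' \<and> j \<in> C' then A i j else 0) * v j)
        = (\<Sum>j\<in>C'. (if i \<in> R' \<and> j \<in> C' then A i j else 0) * v j)"
      by (rule sum.mono_neutral_right[OF C \<open>C' \<subseteq> C\<close>]) auto
    then show ?thesis by simp
  qed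
  have "L2_set (\<lambda>i. \<Sum>j\<in>C. (if i \<in> R' \<and> j \<in> C' then A i j else 0) * v j) R
      = L2_set (\<lambda>i. \<Sum>j\<in>C'. A i j * v j) R'"
  proof -
    have "(if i \<in> R' then x else 0)^2 = (if i \<in> R' then x^2 else 0)" for i and x :: real
      by simp
    then show ?thesis
      unfolding row L2_set_def
      by (simp add: sum.inter_restrict[OF R, symmetric] Int_absorb1 \<open>R' \<subseteq> R\<close>)
  qed
  also have "\<dots> \<le> op_norm R' C' A"
  proof (rule L2_set_mat_vec_le_op_norm)
    have "L2_set v C' \<le> L2_set v C"
      unfolding L2_set_def by (intro real_sqrt_le_mono sum_mono2[OF C \<open>C' \<subseteq> C\<close>]) simp
    then show "L2_set v C' \<le> 1" using v by linarith
  qed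
  finally show "L2_set (\<lambda>i. \<Sum>j\<in>C. (if i \<in> R' \<and> j \<in> C' then A i j else 0) * v j) R \<le> op_norm R' C' A" .
qed

lemma op_norm_empty_rows: "op_norm {} C A = 0"
  using op_norm_le[of C A "{}" 0] op_norm_nonneg[of "{}" C A] by simp

lemma op_norm_le_ball_net_Max:
  assumes R: "finite R" and C: "finite C"
  shows "op_norm R C A \<le> 16/7 * Max ((\<lambda>(u, v). bilin R C A u v) ` (ball_net R \<times> ball_net C))"
proof -
  define M where "M = Max ((\<lambda>(u, v). bilin R C A u v) ` (ball_net R \<times> ball_net C))"
  define \<sigma> where "\<sigma> = op_norm R C A"
  have M_ge: "bilin R C A u v \<le> M" if "u \<in> ball_net R" "v \<in> ball_net C" for u v
    unfolding M_def using that finite_ball_net[OF R] finite_ball_net[OF C]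
    by (intro Max_ge) force+
  have "\<sigma> \<le> M + 9/16 * \<sigma>"
    unfolding \<sigma>_def
  proof (rule op_norm_le)
    fix v assume v: "L2_set v C \<le> 1"
    define y where "y = (\<lambda>i. \<Sum>j\<in>C. A i j * v j)"
    define u where "u = (\<lambda>i. y i / L2_set y R)"
    obtain u' where u': "u' \<in> ball_net R" "L2_set (\<lambda>i. u i - u' i) R \<le> 1/4"
      using ball_net_approx[OF R, of u] L2_set_normalize_le_1 unfolding u_def by blast
    obtain v' where v': "v' \<in> ball_net C" "L2_set (\<lambda>j. v j - v' j) C \<le> 1/4"
      using ball_net_approx[OF C v] by blast
    have "L2_set (\<lambda>i. u i - u' i) R * \<sigma> * L2_set v C \<le> 1/4 * \<sigma> * 1"
      using u'(2) v op_norm_nonneg[of R C A] unfolding \<sigma>_def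
      by (intro mult_mono[OF mult_right_mono]) auto
    then have err_u: "bilin R C A (\<lambda>i. u i - u' i) v \<le> 1/4 * \<sigma>"
      using bilin_le_op_norm[OF C, of R A "\<lambda>i. u i - u' i" v] unfolding \<sigma>_def by linarith
    have "L2_set u' R * \<sigma> * L2_set (\<lambda>j. v j - v' j) C \<le> 5/4 * \<sigma> * (1/4)"
      using L2_set_ball_net_le[OF u'(1)] v'(2) op_norm_nonneg[of R C A] unfolding \<sigma>_def
      by (intro mult_mono[OF mult_right_mono]) auto
    then have err_v: "bilin R C A u' (\<lambda>j. v j - v' j) \<le> 5/16 * \<sigma>"
      using bilin_le_op_norm[OF C, of R A u' "\<lambda>j. v j - v' j"] unfolding \<sigma>_def by linarith
    have "L2_set y R = (\<Sum>i\<in>R. y i / L2_set y R * y i)"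
      by (rule sum_normalize_mult_eq_L2_set[symmetric])
    also have "\<dots> = bilin R C A u v"
      by (simp only: bilin_def u_def y_def)
    also have "\<dots> \<le> M + 9/16 * \<sigma>"
      using bilin_decompose[of R C A u v u' v'] M_ge[OF u'(1) v'(1)] err_u err_v by linarith
    finally show "L2_set (\<lambda>i. \<Sum>j\<in>C. A i j * v j) R \<le> M + 9/16 * op_norm R C A"
      by (simp add: y_def \<sigma>_def)
  qed
  then show ?thesis unfolding M_def \<sigma>_def by linarith
qed

lemma L2_set_le_ball_net_Max:
  assumes "finite I"
  shows "L2_set f I \<le> 4/3 * Max ((\<lambda>w. \<Sum>i\<in>I. w i * f i) ` ball_net I)"
proof -
  define M where "M = Max ((\<lambda>w. \<Sum>i\<in>I. w i * f i) ` ball_net I)"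
  define w where "w = (\<lambda>i. f i / L2_set f I)"
  obtain w' where w': "w' \<in> ball_net I" "L2_set (\<lambda>i. w i - w' i) I \<le> 1/4"
    using ball_net_approx[OF assms, of w] L2_set_normalize_le_1 unfolding w_def by blast
  have M_ge: "(\<Sum>i\<in>I. w' i * f i) \<le> M"
    unfolding M_def using w'(1) finite_ball_net[OF assms] by (intro Max_ge) auto
  have err: "(\<Sum>i\<in>I. (w i - w' i) * f i) \<le> 1/4 * L2_set f I"
    using abs_le_D1[OF abs_sum_mult_le_L2_set[of "\<lambda>i. w i - w' i" f I]]
      mult_right_mono[OF w'(2) L2_set_nonneg[of f I]] by linarith
  have "L2_set f I = (\<Sum>i\<in>I. w i * f i)"
    unfolding w_def by (rule sum_normalize_mult_eq_L2_set[symmetric])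
  also have "\<dots> = (\<Sum>i\<in>I. w' i * f i) + (\<Sum>i\<in>I. (w i - w' i) * f i)"
    by (simp add: algebra_simps sum_subtractf)
  finally show ?thesis using M_ge err unfolding M_def by linarith
qed

section \<open>Linear forms in the Bernoulli errors\<close>

lemma indep_vars_Pi_pmf_bernoulli_errors:
  assumes "finite I"
  shows "prob_space.indep_vars (measure_pmf (Pi_pmf I dflt (\<lambda>e. bernoulli_pmf (q e)))) (\<lambda>_. borel)
    (\<lambda>e b. c e * (of_bool (b e) - q e)) I"
  using prob_space.indep_vars_compose2[OF measure_pmf.prob_space_axioms indep_vars_Pi_pmf[OF assms],
      of "\<lambda>e bb. c e * (of_bool bb - q e)" "\<lambda>_. borel"]
  by simp

lemma expectation_Pi_pmf_bernoulli_error: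
  assumes "finite I" and "e \<in> I" and "0 \<le> q e" and "q e \<le> 1"
  shows "measure_pmf.expectation (Pi_pmf I dflt (\<lambda>e. bernoulli_pmf (q e)))
    (\<lambda>b. c * (of_bool (b e) - q e)) = 0"
proof -
  have "measure_pmf.expectation (Pi_pmf I dflt (\<lambda>e. bernoulli_pmf (q e))) (\<lambda>b. c * (of_bool (b e) - q e))
    = measure_pmf.expectation (map_pmf (\<lambda>b. b e) (Pi_pmf I dflt (\<lambda>e. bernoulli_pmf (q e))))
        (\<lambda>bb. c * (of_bool bb - q e))"
    by simp
  also have "map_pmf (\<lambda>b. b e) (Pi_pmf I dflt (\<lambda>e. bernoulli_pmf (q e))) = bernoulli_pmf (q e)"
    using assms(2) by (simp add: Pi_pmf_component[OF assms(1)])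
  finally show ?thesis using assms(3,4) by (simp add: algebra_simps)
qed

lemma Pi_pmf_bernoulli_linear_tail:
  fixes c q :: "'a \<Rightarrow> real"
  assumes I: "finite I" and q: "\<And>e. e \<in> I \<Longrightarrow> 0 \<le> q e \<and> q e \<le> 1"
    and t: "t > 0" and s: "(\<Sum>e\<in>I. (c e)^2) \<le> s"
  shows "measure_pmf.prob (Pi_pmf I dflt (\<lambda>e. bernoulli_pmf (q e)))
      {b. t \<le> (\<Sum>e\<in>I. c e * (of_bool (b e) - q e))} \<le> exp (- (t^2) / (2 * s))"
proof (cases "(\<Sum>e\<in>I. (c e)^2) = 0")
  case True
  then have "\<forall>e\<in>I. c e = 0" using I by (simp add: sum_nonneg_eq_0_iff)
  then show ?thesis using t by simp
next
  case False
  define S where "S = (\<Sum>e\<in>I. (c e)^2)"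
  have S_pos: "S > 0" using False by (simp add: S_def order_less_le sum_nonneg)
  define M where "M = Pi_pmf I dflt (\<lambda>e. bernoulli_pmf (q e))"
  define X where "X = (\<lambda>e (b :: 'a \<Rightarrow> bool). c e * (of_bool (b e) - q e))"
  interpret Hoeffding_ineq "measure_pmf M" I X "\<lambda>e. - \<bar>c e\<bar>" "\<lambda>e. \<bar>c e\<bar>" 0
  proof unfold_locales
    show "finite I" by (rule I)
    show "prob_space.indep_vars (measure_pmf M) (\<lambda>_. borel) X I"
      unfolding M_def X_def by (rule indep_vars_Pi_pmf_bernoulli_errors[OF I])
    fix e assume e: "e \<in> I"
    have "\<bar>of_bool (b e) - q e\<bar> \<le> (1::real)" for b :: "'a \<Rightarrow> bool"
      using q[OF e] by (cases "b e") auto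
    then have bound: "\<bar>X e b\<bar> \<le> \<bar>c e\<bar>" for b
      unfolding X_def abs_mult by (simp add: mult_left_le)
    have "X e b \<in> {- \<bar>c e\<bar>..\<bar>c e\<bar>}" for b
      using bound[of b] by (auto simp: abs_le_iff)
    then show "AE b in measure_pmf M. X e b \<in> {- \<bar>c e\<bar>..\<bar>c e\<bar>}"
      by (rule AE_I2)
  next
    have "measure_pmf.expectation M (X e) = 0" if "e \<in> I" for e
      using expectation_Pi_pmf_bernoulli_error[OF I that] q[OF that] by (simp add: M_def X_def)
    then show "0 \<equiv> \<Sum>e\<in>I. measure_pmf.expectation M (X e)"
      by simp
  qed
  have width: "(\<Sum>e\<in>I. (\<bar>c e\<bar> - - \<bar>c e\<bar>)^2) = 4 * S"
    by (simp add: S_def sum_distrib_left power2_eq_square)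
  have "measure_pmf.prob M {b. t \<le> (\<Sum>e\<in>I. X e b)} \<le> exp (-2 * t^2 / (4 * S))"
    using Hoeffding_ineq_ge[of t] t S_pos unfolding width by simp
  also have "\<dots> \<le> exp (- (t^2) / (2 * s))"
  proof -
    have "t^2 / (2 * s) \<le> t^2 / (2 * S)"
      using s S_pos by (intro divide_left_mono) (auto simp: S_def)
    then show ?thesis by simp
  qed
  finally show ?thesis by (simp add: M_def X_def)
qed

lemma finite_upper_idx: "finite (upper_idx n)"
proof -
  have "upper_idx n \<subseteq> {..<n} \<times> {..<n}" by (auto simp: upper_idx_def)
  then show ?thesis by (rule finite_subset) simp
qed

lemma bern_law_linear_tail:
  assumes "\<forall>i j. i \<le> j \<and> j < n \<longrightarrow> 0 \<le> p i j \<and> p i j \<le> 1"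
    and "t > 0" and "(\<Sum>e\<in>upper_idx n. (c e)^2) \<le> s"
  shows "measure_pmf.prob (bern_law n p)
      {b. t \<le> (\<Sum>e\<in>upper_idx n. c e * (of_bool (b e) - case_prod p e))} \<le> exp (- (t^2) / (2 * s))"
proof -
  have law: "bern_law n p = Pi_pmf (upper_idx n) False (\<lambda>e. bernoulli_pmf (case_prod p e))"
    by (simp add: bern_law_def split_def)
  have p: "0 \<le> case_prod p e \<and> case_prod p e \<le> 1" if "e \<in> upper_idx n" for e
    using that assms(1) by (auto simp: upper_idx_def)
  show ?thesis
    unfolding law by (rule Pi_pmf_bernoulli_linear_tail[OF finite_upper_idx p assms(2,3)])
qed

lemma sum_lessThan_square_eq_sum_upper_idx:
  "(\<Sum>i<n. \<Sum>j<n. g i j) = (\<Sum>(i, j)\<in>upper_idx n. g i j + (if i = j then 0 else g j i))"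
proof -
  define lower where "lower = {(i, j). j < i \<and> i < n}"
  define strict_upper where "strict_upper = {(i, j). i < j \<and> j < n}"
  have "(\<Sum>i<n. \<Sum>j<n. g i j) = (\<Sum>(i, j)\<in>{..<n} \<times> {..<n}. g i j)"
    by (rule sum.cartesian_product)
  also have "{..<n} \<times> {..<n} = upper_idx n \<union> lower"
    by (auto simp: lower_def upper_idx_def)
  also have "(\<Sum>(i, j)\<in>upper_idx n \<union> lower. g i j) = (\<Sum>(i, j)\<in>upper_idx n. g i j) + (\<Sum>(i, j)\<in>lower. g i j)"
    by (rule sum.union_disjoint)
      (auto simp: finite_upper_idx lower_def upper_idx_def intro: finite_subset[of _ "{..<n} \<times> {..<n}"])
  also have "(\<Sum>(i, j)\<in>lower. g i j) = (\<Sum>(i, j)\<in>strict_upper. g j i)"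
  proof -
    have "lower = prod.swap ` strict_upper" by (auto simp: lower_def strict_upper_def image_iff)
    then show ?thesis by (simp add: sum.reindex case_prod_beta)
  qed
  also have "\<dots> = (\<Sum>(i, j)\<in>upper_idx n. if i = j then 0 else g j i)"
    by (rule sum.mono_neutral_cong_left[OF finite_upper_idx])
      (auto simp: strict_upper_def upper_idx_def split: if_splits)
  finally show ?thesis by (simp add: sum.distrib case_prod_beta)
qed

definition upper_coef :: "(nat \<Rightarrow> nat \<Rightarrow> real) \<Rightarrow> nat \<times> nat \<Rightarrow> real" where
  "upper_coef a = (\<lambda>(i, j). a i j + (if i = j then 0 else a j i))"

lemma sum_mult_Xi_eq:
  "(\<Sum>i<n. \<Sum>j<n. a i j * Xi p b i j) = (\<Sum>e\<in>upper_idx n. upper_coef a e * (of_bool (b e) - case_prod p e))"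
  unfolding sum_lessThan_square_eq_sum_upper_idx
  by (rule sum.cong) (auto simp: upper_idx_def Xi_def upper_coef_def algebra_simps)

lemma sum_upper_coef_power2_le:
  "(\<Sum>e\<in>upper_idx n. (upper_coef a e)^2) \<le> 2 * (\<Sum>i<n. \<Sum>j<n. (a i j)^2)"
proof -
  have "(x + y)^2 \<le> 2 * x^2 + 2 * y^2" for x y :: real
  proof -
    have "(x + y)^2 + (x - y)^2 = 2 * x^2 + 2 * y^2" by (simp add: power2_eq_square algebra_simps)
    then show ?thesis using zero_le_power2[of "x - y"] by linarith
  qed
  then have "(upper_coef a e)^2 \<le> (case e of (i, j) \<Rightarrow> 2 * (a i j)^2 + (if i = j then 0 else 2 * (a j i)^2))" for e
    by (cases e) (simp add: upper_coef_def)
  then have "(\<Sum>e\<in>upper_idx n. (upper_coef a e)^2)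
      \<le> (\<Sum>(i, j)\<in>upper_idx n. 2 * (a i j)^2 + (if i = j then 0 else 2 * (a j i)^2))"
    by (rule sum_mono)
  also have "\<dots> = (\<Sum>i<n. \<Sum>j<n. 2 * (a i j)^2)"
    by (rule sum_lessThan_square_eq_sum_upper_idx[symmetric])
  finally show ?thesis by (simp add: sum_distrib_left)
qed

section \<open>Block decomposition\<close>

lemma proj_block_eq: "proj_block J k l X = (\<lambda>i j. if i \<in> J k l \<and> j \<in> J l k then X i j else 0)"
  by (simp add: fun_eq_iff proj_block_def)

abbreviation block_rows :: "(nat \<Rightarrow> nat \<Rightarrow> nat set) \<Rightarrow> nat \<times> nat \<Rightarrow> nat set"
  where "block_rows J kl \<equiv> J (fst kl) (snd kl)"

abbreviation block_cols :: "(nat \<Rightarrow> nat \<Rightarrow> nat set) \<Rightarrow> nat \<times> nat \<Rightarrow> nat set"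
  where "block_cols J kl \<equiv> J (snd kl) (fst kl)"

definition active_blocks :: "nat \<Rightarrow> (nat \<Rightarrow> nat \<Rightarrow> nat set) \<Rightarrow> (nat \<times> nat) set" where
  "active_blocks K J = {kl. fst kl < K \<and> snd kl < K \<and> block_rows J kl \<noteq> {}}"

lemma finite_active_blocks: "finite (active_blocks K J)"
  by (rule finite_subset[of _ "{..<K} \<times> {..<K}"]) (auto simp: active_blocks_def)

lemma active_blocks_lt: "kl \<in> active_blocks K J \<Longrightarrow> fst kl < K \<and> snd kl < K"
  by (simp add: active_blocks_def)

lemma sum_card_block_rows_le:
  "(\<Sum>kl\<in>active_blocks K J. card (block_rows J kl)) \<le> (\<Sum>k<K. \<Sum>l<K. card (J k l))"
proof -
  have "(\<Sum>kl\<in>active_blocks K J. card (block_rows J kl)) \<le> (\<Sum>kl\<in>{..<K} \<times> {..<K}. card (block_rows J kl))"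
    by (rule sum_mono2) (auto simp: active_blocks_def)
  also have "\<dots> = (\<Sum>k<K. \<Sum>l<K. card (J k l))"
    by (simp add: sum.cartesian_product case_prod_beta)
  finally show ?thesis .
qed

lemma sum_card_block_cols_le:
  "(\<Sum>kl\<in>active_blocks K J. card (block_cols J kl)) \<le> (\<Sum>k<K. \<Sum>l<K. card (J k l))"
proof -
  have "(\<Sum>kl\<in>active_blocks K J. card (block_cols J kl)) \<le> (\<Sum>kl\<in>{..<K} \<times> {..<K}. card (block_cols J kl))"
    by (rule sum_mono2) (auto simp: active_blocks_def)
  also have "\<dots> = (\<Sum>l<K. \<Sum>k<K. card (J k l))"
    by (simp add: sum.cartesian_product case_prod_beta)
  also have "\<dots> = (\<Sum>k<K. \<Sum>l<K. card (J k l))"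
    by (rule sum.swap)
  finally show ?thesis .
qed

type_synonym block_param = "(nat \<times> nat \<Rightarrow> real) \<times> (nat \<times> nat \<Rightarrow> (nat \<Rightarrow> real) \<times> (nat \<Rightarrow> real))"

(* A parameter (w, U) weights the active blocks by the net point w and tests block kl with the
   pair of net points U kl. *)
definition block_params :: "nat \<Rightarrow> (nat \<Rightarrow> nat \<Rightarrow> nat set) \<Rightarrow> block_param set" where
  "block_params K J = ball_net (active_blocks K J) \<times>
     (\<Pi>\<^sub>E kl\<in>active_blocks K J. ball_net (block_rows J kl) \<times> ball_net (block_cols J kl))"

definition block_form ::
  "nat \<Rightarrow> (nat \<Rightarrow> nat \<Rightarrow> nat set) \<Rightarrow> (nat \<Rightarrow> nat \<Rightarrow> real) \<Rightarrow> block_param \<Rightarrow> (nat \<times> nat \<Rightarrow> bool) \<Rightarrow> real"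
  where "block_form K J p \<theta> b = (case \<theta> of (w, U) \<Rightarrow>
    \<Sum>kl\<in>active_blocks K J. w kl * case_prod (bilin (block_rows J kl) (block_cols J kl) (Xi p b)) (U kl))"

definition block_coef :: "nat \<Rightarrow> (nat \<Rightarrow> nat \<Rightarrow> nat set) \<Rightarrow> block_param \<Rightarrow> nat \<Rightarrow> nat \<Rightarrow> real"
  where "block_coef K J \<theta> i j = (case \<theta> of (w, U) \<Rightarrow>
    \<Sum>kl\<in>active_blocks K J. if i \<in> block_rows J kl \<and> j \<in> block_cols J kl
      then w kl * fst (U kl) i * snd (U kl) j else 0)"

definition net_block_Max :: "(nat \<Rightarrow> nat \<Rightarrow> nat set) \<Rightarrow> (nat \<Rightarrow> nat \<Rightarrow> real) \<Rightarrow> nat \<times> nat \<Rightarrow> real"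
  where "net_block_Max J X kl = Max (case_prod (bilin (block_rows J kl) (block_cols J kl) X) `
    (ball_net (block_rows J kl) \<times> ball_net (block_cols J kl)))"

locale block_partition =
  fixes n K :: nat and G :: "nat \<Rightarrow> nat set" and J :: "nat \<Rightarrow> nat \<Rightarrow> nat set"
  assumes G_cover: "(\<Union>k<K. G k) = {..<n}"
    and G_disjoint: "\<forall>k<K. \<forall>l<K. k \<noteq> l \<longrightarrow> G k \<inter> G l = {}"
    and J_subset_G: "\<forall>k<K. \<forall>l<K. J k l \<subseteq> G k"
begin

lemma finite_G: "k < K \<Longrightarrow> finite (G k)"
  using G_cover finite_subset[of "G k" "{..<n}"] by blast

lemma J_subset_lessThan: "k < K \<Longrightarrow> l < K \<Longrightarrow> J k l \<subseteq> {..<n}"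
  using G_cover J_subset_G by blast

lemma finite_J: "k < K \<Longrightarrow> l < K \<Longrightarrow> finite (J k l)"
  using J_subset_lessThan finite_subset by blast

lemma J_row_unique:
  "k < K \<Longrightarrow> l < K \<Longrightarrow> k' < K \<Longrightarrow> l' < K \<Longrightarrow> i \<in> J k l \<Longrightarrow> i \<in> J k' l' \<Longrightarrow> k = k'"
  using G_disjoint J_subset_G by blast

lemma block_form_eq_sum_Xi:
  "block_form K J p \<theta> b = (\<Sum>i<n. \<Sum>j<n. block_coef K J \<theta> i j * Xi p b i j)"
proof -
  obtain w U where \<theta>: "\<theta> = (w, U)" by fastforce
  define t where "t = (\<lambda>kl i j. w kl * fst (U kl) i * snd (U kl) j * Xi p b i j)"
  have block: "w kl * case_prod (bilin (block_rows J kl) (block_cols J kl) (Xi p b)) (U kl)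
      = (\<Sum>i<n. \<Sum>j<n. if i \<in> block_rows J kl \<and> j \<in> block_cols J kl then t kl i j else 0)"
    if "kl \<in> active_blocks K J" for kl
  proof -
    have "w kl * case_prod (bilin (block_rows J kl) (block_cols J kl) (Xi p b)) (U kl)
        = (\<Sum>i\<in>block_rows J kl. \<Sum>j\<in>block_cols J kl. t kl i j)"
      by (simp add: bilin_def t_def split_def sum_distrib_left mult_ac)
    also have "\<dots> = (\<Sum>i<n. \<Sum>j<n. if i \<in> block_rows J kl \<and> j \<in> block_cols J kl then t kl i j else 0)"
      using that by (intro sum_sum_if_mem_subset[symmetric] J_subset_lessThan)
        (auto simp: active_blocks_def)
    finally show ?thesis .
  qed
  have "block_form K J p \<theta> b = (\<Sum>kl\<in>active_blocks K J. \<Sum>i<n. \<Sum>j<n.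
      if i \<in> block_rows J kl \<and> j \<in> block_cols J kl then t kl i j else 0)"
    unfolding block_form_def \<theta> prod.case using block by (rule sum.cong[OF refl])
  also have "\<dots> = (\<Sum>i<n. \<Sum>j<n. \<Sum>kl\<in>active_blocks K J.
      if i \<in> block_rows J kl \<and> j \<in> block_cols J kl then t kl i j else 0)"
    by (rule sum_swap3[symmetric])
  also have "\<dots> = (\<Sum>i<n. \<Sum>j<n. block_coef K J \<theta> i j * Xi p b i j)"
    unfolding block_coef_def \<theta> prod.case t_def sum_distrib_right by (intro sum.cong refl) simp
  finally show ?thesis .
qed

lemma power2_block_coef:
  "(block_coef K J (w, U) i j)^2 = (\<Sum>kl\<in>active_blocks K J.
    if i \<in> block_rows J kl \<and> j \<in> block_cols J kl then (w kl * fst (U kl) i * snd (U kl) j)^2 else 0)"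
proof -
  have "(block_coef K J (w, U) i j)^2 = (\<Sum>kl\<in>active_blocks K J.
      (if i \<in> block_rows J kl \<and> j \<in> block_cols J kl then w kl * fst (U kl) i * snd (U kl) j else 0)^2)"
    unfolding block_coef_def prod.case
  proof (rule power2_sum_eq_sum_power2[OF finite_active_blocks])
    fix kl kl' assume kl: "kl \<in> active_blocks K J" and kl': "kl' \<in> active_blocks K J"
      and "(if i \<in> block_rows J kl \<and> j \<in> block_cols J kl then w kl * fst (U kl) i * snd (U kl) j else 0) \<noteq> 0"
      and "(if i \<in> block_rows J kl' \<and> j \<in> block_cols J kl' then w kl' * fst (U kl') i * snd (U kl') j else 0) \<noteq> 0"
    then have "i \<in> block_rows J kl" "i \<in> block_rows J kl'" "j \<in> block_cols J kl" "j \<in> block_cols J kl'"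
      by (auto split: if_splits)
    then have "fst kl = fst kl'" "snd kl = snd kl'"
      using J_row_unique active_blocks_lt[OF kl] active_blocks_lt[OF kl'] by blast+
    then show "kl = kl'" by (simp add: prod_eq_iff)
  qed
  then show ?thesis by (simp add: if_distrib[of "\<lambda>y. y^2"] cong: if_cong)
qed

lemma sum_block_coef_power2_le:
  assumes "\<theta> \<in> block_params K J"
  shows "(\<Sum>i<n. \<Sum>j<n. (block_coef K J \<theta> i j)^2) \<le> (5/4)^6"
proof -
  obtain w U where \<theta>: "\<theta> = (w, U)" by fastforce
  let ?B = "active_blocks K J"
  have w: "L2_set w ?B \<le> 5/4"
    using assms L2_set_ball_net_le by (auto simp: block_params_def \<theta>)
  have uv: "L2_set (fst (U kl)) (block_rows J kl) \<le> 5/4 \<and> L2_set (snd (U kl)) (block_cols J kl) \<le> 5/4"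
    if "kl \<in> ?B" for kl
    using assms that L2_set_ball_net_le by (auto simp: block_params_def \<theta> PiE_iff mem_Times_iff)
  have "(\<Sum>i<n. \<Sum>j<n. (block_coef K J \<theta> i j)^2) = (\<Sum>kl\<in>?B. \<Sum>i<n. \<Sum>j<n.
      if i \<in> block_rows J kl \<and> j \<in> block_cols J kl then (w kl * fst (U kl) i * snd (U kl) j)^2 else 0)"
    unfolding \<theta> power2_block_coef by (rule sum_swap3)
  also have "\<dots> = (\<Sum>kl\<in>?B. \<Sum>i\<in>block_rows J kl. \<Sum>j\<in>block_cols J kl. (w kl * fst (U kl) i * snd (U kl) j)^2)"
    by (intro sum.cong refl sum_sum_if_mem_subset J_subset_lessThan) (auto dest: active_blocks_lt)
  also have "\<dots> = (\<Sum>kl\<in>?B. (w kl)^2 * (L2_set (fst (U kl)) (block_rows J kl))^2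
      * (L2_set (snd (U kl)) (block_cols J kl))^2)"
    by (simp only: sum_power2_outer_product)
  also have "\<dots> \<le> (\<Sum>kl\<in>?B. (w kl)^2 * (5/4)^2 * (5/4)^2)"
    using uv by (intro sum_mono mult_left_mono mult_mono power_mono) auto
  also have "\<dots> = (L2_set w ?B)^2 * ((5/4)^2 * (5/4)^2)"
    by (simp only: power2_L2_set sum_distrib_right mult.assoc)
  also have "\<dots> \<le> (5/4)^2 * ((5/4)^2 * (5/4)^2)"
    using w by (intro mult_right_mono power_mono) auto
  finally show ?thesis by simp
qed

lemma finite_block_params: "finite (block_params K J)"
  unfolding block_params_def
  using finite_J active_blocks_lt
  by (intro finite_cartesian_product finite_ball_net finite_active_blocks finite_PiE) auto

lemma card_active_blocks_le: "card (active_blocks K J) \<le> (\<Sum>kl\<in>active_blocks K J. card (block_rows J kl))"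
proof -
  have "card (active_blocks K J) = (\<Sum>kl\<in>active_blocks K J. 1)" by simp
  also have "\<dots> \<le> (\<Sum>kl\<in>active_blocks K J. card (block_rows J kl))"
    using finite_J by (intro sum_mono) (auto simp: active_blocks_def Suc_le_eq card_gt_0_iff)
  finally show ?thesis .
qed

lemma card_block_params_le:
  "card (block_params K J) \<le> 2 ^ (27 * (\<Sum>k<K. \<Sum>l<K. card (J k l)))"
proof -
  let ?B = "active_blocks K J"
  define m where "m = (\<Sum>k<K. \<Sum>l<K. card (J k l))"
  have "card (block_params K J) = card (ball_net ?B) *
      (\<Prod>kl\<in>?B. card (ball_net (block_rows J kl)) * card (ball_net (block_cols J kl)))"
    unfolding block_params_def card_cartesian_product card_PiE[OF finite_active_blocks] ..
  also have "\<dots> \<le> 512 ^ card ?B * (\<Prod>kl\<in>?B. 512 ^ card (block_rows J kl) * 512 ^ card (block_cols J kl))"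
    using finite_J active_blocks_lt
    by (intro mult_mono prod_mono card_ball_net_le finite_active_blocks conjI) auto
  also have "\<dots> = 512 ^ (card ?B + (\<Sum>kl\<in>?B. card (block_rows J kl) + card (block_cols J kl)))"
    by (simp add: power_add power_sum prod.distrib)
  also have "\<dots> \<le> 512 ^ (3 * m)"
    using card_active_blocks_le sum_card_block_rows_le[of J K] sum_card_block_cols_le[of J K]
    by (intro power_increasing) (auto simp: sum.distrib m_def)
  also have "\<dots> = 2 ^ (27 * m)" by (simp add: power_mult)
  finally show ?thesis by (simp add: m_def)
qed

lemma sum_op_norm_power2_le_net_block_Max:
  "(\<Sum>k<K. \<Sum>l<K. (op_norm (G k) (G l) (proj_block J k l X))^2)
    \<le> (16/7)^2 * (L2_set (net_block_Max J X) (active_blocks K J))^2"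
proof -
  let ?B = "active_blocks K J"
  define s where "s = (\<lambda>kl. op_norm (G (fst kl)) (G (snd kl)) (proj_block J (fst kl) (snd kl) X))"
  have s_le: "s kl \<le> op_norm (block_rows J kl) (block_cols J kl) X"
    if kl_lt: "kl \<in> {..<K} \<times> {..<K}" for kl
  proof -
    obtain k l where kl: "kl = (k, l)" "k < K" "l < K" using kl_lt by (cases kl) auto
    then show ?thesis
      unfolding s_def proj_block_eq using J_subset_G finite_G by (intro op_norm_restrict_le) auto
  qed
  have inactive: "s kl = 0" if "kl \<in> {..<K} \<times> {..<K} - ?B" for kl
  proof -
    have "block_rows J kl = {}" using that by (auto simp: active_blocks_def)
    then have "s kl \<le> 0" using s_le[of kl] that by (simp add: op_norm_empty_rows)
    then show ?thesis
      using op_norm_nonneg[of "G (fst kl)" "G (snd kl)" "proj_block J (fst kl) (snd kl) X"]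
      by (simp add: s_def)
  qed
  have active: "s kl \<le> 16/7 * net_block_Max J X kl" if "kl \<in> ?B" for kl
  proof -
    have lt: "fst kl < K" "snd kl < K" using active_blocks_lt[OF that] by auto
    have "s kl \<le> op_norm (block_rows J kl) (block_cols J kl) X" using lt by (intro s_le) (simp add: mem_Times_iff)
    also have "\<dots> \<le> 16/7 * net_block_Max J X kl"
      unfolding net_block_Max_def using lt finite_J by (intro op_norm_le_ball_net_Max) auto
    finally show ?thesis .
  qed
  have "(\<Sum>k<K. \<Sum>l<K. (op_norm (G k) (G l) (proj_block J k l X))^2) = (\<Sum>kl\<in>{..<K} \<times> {..<K}. (s kl)^2)"
    by (simp add: s_def sum.cartesian_product case_prod_beta)
  also have "\<dots> = (\<Sum>kl\<in>?B. (s kl)^2)"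
    using inactive by (intro sum.mono_neutral_right) (auto simp: active_blocks_def)
  also have "\<dots> \<le> (\<Sum>kl\<in>?B. (16/7 * net_block_Max J X kl)^2)"
    using active by (intro sum_mono power_mono) (auto simp: s_def op_norm_nonneg)
  also have "\<dots> = (16/7)^2 * (L2_set (net_block_Max J X) ?B)^2"
    by (simp only: power2_L2_set power_mult_distrib sum_distrib_left)
  finally show ?thesis .
qed

lemma exists_block_param_attaining_Max:
  "\<exists>\<theta>\<in>block_params K J. block_form K J p \<theta> b
    = Max ((\<lambda>w. \<Sum>kl\<in>active_blocks K J. w kl * net_block_Max J (Xi p b) kl) ` ball_net (active_blocks K J))"
proof -
  let ?B = "active_blocks K J"
  define M where "M = net_block_Max J (Xi p b)"
  define S where "S = (\<lambda>kl. ball_net (block_rows J kl) \<times> ball_net (block_cols J kl))"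
  define g where "g = (\<lambda>kl. case_prod (bilin (block_rows J kl) (block_cols J kl) (Xi p b)))"
  have "Max ((\<lambda>w. \<Sum>kl\<in>?B. w kl * M kl) ` ball_net ?B) \<in> (\<lambda>w. \<Sum>kl\<in>?B. w kl * M kl) ` ball_net ?B"
    using finite_ball_net[OF finite_active_blocks] zero_in_ball_net by (intro Max_in) auto
  then obtain w where w: "w \<in> ball_net ?B"
    and w_Max: "(\<Sum>kl\<in>?B. w kl * M kl) = Max ((\<lambda>w. \<Sum>kl\<in>?B. w kl * M kl) ` ball_net ?B)"
    by auto
  have S_finite: "finite (S kl)" if "kl \<in> ?B" for kl
    using that finite_J active_blocks_lt by (simp add: S_def finite_ball_net)
  have S_nonempty: "S kl \<noteq> {}" if "kl \<in> ?B" for kl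
    using zero_in_ball_net by (auto simp: S_def)
  have "\<exists>U\<in>PiE ?B S. \<forall>kl\<in>?B. g kl (U kl) = Max (g kl ` S kl)"
    using S_finite S_nonempty by (rule PiE_attaining_Max)
  then obtain U where U: "U \<in> PiE ?B S" and U_Max: "\<And>kl. kl \<in> ?B \<Longrightarrow> g kl (U kl) = Max (g kl ` S kl)"
    by blast
  have "block_form K J p (w, U) b = (\<Sum>kl\<in>?B. w kl * M kl)"
    unfolding block_form_def prod.case
    by (intro sum.cong refl) (simp add: U_Max[unfolded g_def S_def] M_def net_block_Max_def)
  then have form: "block_form K J p (w, U) b = Max ((\<lambda>w. \<Sum>kl\<in>?B. w kl * M kl) ` ball_net ?B)"
    using w_Max by simp
  show ?thesis
  proof (rule bexI[where x = "(w, U)"])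
    show "(w, U) \<in> block_params K J" using w U by (simp add: block_params_def S_def)
  qed (use form in \<open>simp add: M_def\<close>)
qed

lemma exists_block_param_dominating:
  obtains \<theta> where "\<theta> \<in> block_params K J" and "0 \<le> block_form K J p \<theta> b"
    and "(\<Sum>k<K. \<Sum>l<K. (op_norm (G k) (G l) (proj_block J k l (Xi p b)))^2)
      \<le> (64/21)^2 * (block_form K J p \<theta> b)^2"
proof -
  let ?M = "net_block_Max J (Xi p b)"
  obtain \<theta> where \<theta>: "\<theta> \<in> block_params K J"
    and form: "block_form K J p \<theta> b
      = Max ((\<lambda>w. \<Sum>kl\<in>active_blocks K J. w kl * ?M kl) ` ball_net (active_blocks K J))"
    using exists_block_param_attaining_Max by blast
  have L2_le: "L2_set ?M (active_blocks K J) \<le> 4/3 * block_form K J p \<theta> b"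
    unfolding form by (rule L2_set_le_ball_net_Max[OF finite_active_blocks])
  have "(\<Sum>k<K. \<Sum>l<K. (op_norm (G k) (G l) (proj_block J k l (Xi p b)))^2)
      \<le> (16/7)^2 * (L2_set ?M (active_blocks K J))^2"
    by (rule sum_op_norm_power2_le_net_block_Max)
  also have "\<dots> \<le> (16/7)^2 * (4/3 * block_form K J p \<theta> b)^2"
    using L2_le by (intro mult_left_mono power_mono) auto
  also have "\<dots> = (64/21)^2 * (block_form K J p \<theta> b)^2"
    by (simp add: power2_eq_square)
  finally have dom: "(\<Sum>k<K. \<Sum>l<K. (op_norm (G k) (G l) (proj_block J k l (Xi p b)))^2)
      \<le> (64/21)^2 * (block_form K J p \<theta> b)^2" .
  have "0 \<le> block_form K J p \<theta> b"
    using L2_le L2_set_nonneg[of ?M "active_blocks K J"] by linarith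
  then show thesis by (rule that[OF \<theta> _ dom])
qed

lemma prob_block_form_ge_le:
  assumes p: "\<forall>i j. i \<le> j \<and> j < n \<longrightarrow> 0 \<le> p i j \<and> p i j \<le> 1"
    and t: "t > 0" and \<theta>: "\<theta> \<in> block_params K J"
  shows "measure_pmf.prob (bern_law n p) {b. t \<le> block_form K J p \<theta> b} \<le> exp (- (t^2) / 16)"
proof -
  have "(\<Sum>e\<in>upper_idx n. (upper_coef (block_coef K J \<theta>) e)^2) \<le> 2 * (5/4)^6"
    using sum_upper_coef_power2_le[of "block_coef K J \<theta>" n] sum_block_coef_power2_le[OF \<theta>]
    by linarith
  also have "\<dots> \<le> 8" by (simp add: power_divide)
  finally have var: "(\<Sum>e\<in>upper_idx n. (upper_coef (block_coef K J \<theta>) e)^2) \<le> 8" .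
  have "measure_pmf.prob (bern_law n p) {b. t \<le> block_form K J p \<theta> b}
      = measure_pmf.prob (bern_law n p) {b. t \<le> (\<Sum>e\<in>upper_idx n.
          upper_coef (block_coef K J \<theta>) e * (of_bool (b e) - case_prod p e))}"
    unfolding block_form_eq_sum_Xi sum_mult_Xi_eq ..
  also have "\<dots> \<le> exp (- (t^2) / (2 * 8))"
    by (rule bern_law_linear_tail[OF p t var])
  finally show ?thesis by simp
qed

lemma exists_block_form_ge:
  assumes "(64/21)^2 * t^2 < (\<Sum>k<K. \<Sum>l<K. (op_norm (G k) (G l) (proj_block J k l (Xi p b)))^2)"
  shows "\<exists>\<theta>\<in>block_params K J. t \<le> block_form K J p \<theta> b"
proof -
  obtain \<theta> where \<theta>: "\<theta> \<in> block_params K J" "0 \<le> block_form K J p \<theta> b"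
    and dom: "(\<Sum>k<K. \<Sum>l<K. (op_norm (G k) (G l) (proj_block J k l (Xi p b)))^2)
      \<le> (64/21)^2 * (block_form K J p \<theta> b)^2"
    by (rule exists_block_param_dominating)
  have "(64/21)^2 * t^2 < (64/21)^2 * (block_form K J p \<theta> b)^2" using assms dom by linarith
  then have "t^2 < (block_form K J p \<theta> b)^2" by simp
  then have "t \<le> block_form K J p \<theta> b"
    using power_less_imp_less_base[OF _ \<theta>(2)] by fastforce
  then show ?thesis using \<theta>(1) by blast
qed

lemma prob_sum_op_norm_power2_gt_le:
  assumes p: "\<forall>i j. i \<le> j \<and> j < n \<longrightarrow> 0 \<le> p i j \<and> p i j \<le> 1" and t: "t > 0"
  shows "measure_pmf.prob (bern_law n p)
      {b. (64/21)^2 * t^2 < (\<Sum>k<K. \<Sum>l<K. (op_norm (G k) (G l) (proj_block J k l (Xi p b)))^2)}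
    \<le> card (block_params K J) * exp (- (t^2) / 16)"
    (is "measure_pmf.prob ?M ?bad \<le> _")
proof -
  have "?bad \<subseteq> (\<Union>\<theta>\<in>block_params K J. {b. t \<le> block_form K J p \<theta> b})"
    using exists_block_form_ge by blast
  then have "measure_pmf.prob ?M ?bad
      \<le> measure_pmf.prob ?M (\<Union>\<theta>\<in>block_params K J. {b. t \<le> block_form K J p \<theta> b})"
    by (intro measure_pmf.finite_measure_mono) auto
  also have "\<dots> \<le> (\<Sum>\<theta>\<in>block_params K J. measure_pmf.prob ?M {b. t \<le> block_form K J p \<theta> b})"
    by (rule measure_pmf.finite_measure_subadditive_finite[OF finite_block_params]) auto
  also have "\<dots> \<le> card (block_params K J) * exp (- (t^2) / 16)"
    by (rule sum_bounded_above) (rule prob_block_form_ge_le[OF p t])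
  finally show ?thesis .
qed

lemma prob_sum_op_norm_power2_le:
  assumes p: "\<forall>i j. i \<le> j \<and> j < n \<longrightarrow> 0 \<le> p i j \<and> p i j \<le> 1" and x: "x > 0"
  shows "1 - exp (- x) \<le> measure_pmf.prob (bern_law n p)
    {b. (\<Sum>k<K. \<Sum>l<K. (op_norm (G k) (G l) (proj_block J k l (Xi p b)))^2)
        \<le> 432 * (64/21)^2 * real (\<Sum>k<K. \<Sum>l<K. card (J k l)) + 16 * (64/21)^2 * x}"
    (is "_ \<le> measure_pmf.prob ?M ?E")
proof -
  define E where "E = ?E"
  define m where "m = (\<Sum>k<K. \<Sum>l<K. card (J k l))"
  define t where "t = 4 * sqrt (27 * m + x)"
  have t2: "t^2 = 16 * (27 * m + x)" and t_pos: "t > 0"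
    using x by (simp_all add: t_def power_mult_distrib)
  have "UNIV - E = {b. (64/21)^2 * t^2 < (\<Sum>k<K. \<Sum>l<K. (op_norm (G k) (G l) (proj_block J k l (Xi p b)))^2)}"
    by (auto simp: E_def t2 m_def algebra_simps)
  then have "measure_pmf.prob ?M (UNIV - E) \<le> card (block_params K J) * exp (- (t^2) / 16)"
    using prob_sum_op_norm_power2_gt_le[OF p t_pos] by simp
  also have "\<dots> \<le> exp (27 * m) * exp (- (t^2) / 16)"
  proof (rule mult_right_mono)
    have "real (card (block_params K J)) \<le> real (2 ^ (27 * m))"
      using card_block_params_le unfolding m_def by (rule of_nat_mono)
    also have "\<dots> \<le> exp (27 * m)"
      using power_two_le_exp[of "27 * m"] by simp
    finally show "real (card (block_params K J)) \<le> exp (27 * m)" .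
  qed simp
  also have "\<dots> = exp (- x)"
  proof -
    have "- (t^2) / 16 = - 27 * m - x" using t2 by (simp add: minus_divide_left)
    then show ?thesis by (simp flip: exp_add)
  qed
  finally have "measure_pmf.prob ?M (UNIV - E) \<le> exp (- x)" .
  moreover have "measure_pmf.prob ?M (UNIV - E) = 1 - measure_pmf.prob ?M E"
    using measure_pmf.prob_compl[of E ?M] by simp
  ultimately have "1 - exp (- x) \<le> measure_pmf.prob ?M E" by linarith
  then show ?thesis unfolding E_def m_def .
qed

end

theorem lemma7:
  shows "\<exists>C1 > 0. \<exists>C2 > 0. \<forall>(n::nat) (K::nat) (G::nat \<Rightarrow> nat set) (J::nat \<Rightarrow> nat \<Rightarrow> nat set)
      (p::nat \<Rightarrow> nat \<Rightarrow> real) (x::real).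
      (\<Union>k<K. G k) = {..<n} \<longrightarrow>
      (\<forall>k<K. \<forall>l<K. k \<noteq> l \<longrightarrow> G k \<inter> G l = {}) \<longrightarrow>
      (\<forall>k<K. \<forall>l<K. J k l \<subseteq> G k) \<longrightarrow>
      (\<forall>i j. i \<le> j \<and> j < n \<longrightarrow> 0 \<le> p i j \<and> p i j \<le> 1) \<longrightarrow>
      x > 0 \<longrightarrow>
      measure_pmf.prob (bern_law n p)
        {b. (\<Sum>k<K. \<Sum>l<K. (op_norm (G k) (G l) (proj_block J k l (Xi p b)))^2)
              \<le> C1 * real (\<Sum>k<K. \<Sum>l<K. card (J k l)) + C2 * x}
        \<ge> 1 - exp (- x)"
  by (rule exI[of _ "432 * (64/21)^2"], rule conjI, simp,
      rule exI[of _ "16 * (64/21)^2"], rule conjI, simp,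
      intro allI impI, rule block_partition.prob_sum_op_norm_power2_le[OF block_partition.intro],
      assumption+)

end
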